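(* Let $\tilde\kappa>0$, $\kappa\ge1/\sqrt2$ and $\varepsilon>1$. Then the operator $$\frac{\kappa}{\tilde\kappa}+T_0+\frac1\kappa T_2^*\Big(\mathbb{1}-\frac1\kappa T_3\Big)^{-1}T_2$$ is boundedly invertible on $L^2(\mathbb{R})$.
   Context: All operators are evaluated at $\sigma=0$, $z=-\varepsilon$ and act on $L^2(\mathbb{R})$, described in Fourier space (unitary Fourier transform): $T_0$ is multiplication by $(s^2+2\varepsilon)^{-1/2}$, $T_3$ is multiplication by $(s^2+4\varepsilon)^{-1/2}$, $T_2$ is the integral operator in Fourier space with kernel $\hat T_2(s,t)=\frac1\pi(t^2+(s-t)^2+2\varepsilon)^{-1}$, and $T_2^*$ is its adjoint. $\mathbb{1}$ is the identity. *)

theory Defs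
  imports "HOL-Analysis.Analysis"
begin

text \<open>L^2(R) is realised in Fourier space (the unitary Fourier transform is an isometric
 isomorphism of L^2(R), so bounded invertibility is unaffected). Elements are represented
 by square-integrable Borel functions real \<Rightarrow> complex; equality is almost-everywhere equality.\<close>

definition L2 :: "(real \<Rightarrow> complex) set" where
  "L2 = {f. f \<in> borel_measurable lborel \<and> integrable lborel (\<lambda>s. (norm (f s))\<^sup>2)}"

definition L2norm :: "(real \<Rightarrow> complex) \<Rightarrow> real" where
  "L2norm f = sqrt (\<integral>s. (norm (f s))\<^sup>2 \<partial>lborel)"

definition mult_op :: "(real \<Rightarrow> real) \<Rightarrow> (real \<Rightarrow> complex) \<Rightarrow> (real \<Rightarrow> complex)" where
  "mult_op m f = (\<lambda>s. complex_of_real (m s) * f s)"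

definition int_op :: "(real \<Rightarrow> real \<Rightarrow> real) \<Rightarrow> (real \<Rightarrow> complex) \<Rightarrow> (real \<Rightarrow> complex)" where
  "int_op K f = (\<lambda>s. \<integral>t. complex_of_real (K s t) * f t \<partial>lborel)"

definition T0 :: "real \<Rightarrow> (real \<Rightarrow> complex) \<Rightarrow> (real \<Rightarrow> complex)" where
  "T0 \<epsilon> = mult_op (\<lambda>s. 1 / sqrt (s\<^sup>2 + 2 * \<epsilon>))"

definition T3_symbol :: "real \<Rightarrow> real \<Rightarrow> real" where
  "T3_symbol \<epsilon> s = 1 / sqrt (s\<^sup>2 + 4 * \<epsilon>)"

definition T3 :: "real \<Rightarrow> (real \<Rightarrow> complex) \<Rightarrow> (real \<Rightarrow> complex)" where
  "T3 \<epsilon> = mult_op (T3_symbol \<epsilon>)"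

definition T2_kernel :: "real \<Rightarrow> real \<Rightarrow> real \<Rightarrow> real" where
  "T2_kernel \<epsilon> s t = 1 / (pi * (t\<^sup>2 + (s - t)\<^sup>2 + 2 * \<epsilon>))"

definition T2 :: "real \<Rightarrow> (real \<Rightarrow> complex) \<Rightarrow> (real \<Rightarrow> complex)" where
  "T2 \<epsilon> = int_op (T2_kernel \<epsilon>)"

text \<open>Adjoint of T2: kernel conj(K(t,s)) = K(t,s), since K is real.\<close>
definition T2_adj :: "real \<Rightarrow> (real \<Rightarrow> complex) \<Rightarrow> (real \<Rightarrow> complex)" where
  "T2_adj \<epsilon> = int_op (\<lambda>s t. T2_kernel \<epsilon> t s)"

text \<open>(1 - T3/kappa)^{-1}: T3 is the multiplication operator with symbol T3_symbol, so its
 inverse (functional calculus) is multiplication by the reciprocal symbol.\<close>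
definition resolvent3 :: "real \<Rightarrow> real \<Rightarrow> (real \<Rightarrow> complex) \<Rightarrow> (real \<Rightarrow> complex)" where
  "resolvent3 \<kappa> \<epsilon> = mult_op (\<lambda>s. inverse (1 - T3_symbol \<epsilon> s / \<kappa>))"

definition op_A :: "real \<Rightarrow> real \<Rightarrow> real \<Rightarrow> (real \<Rightarrow> complex) \<Rightarrow> (real \<Rightarrow> complex)" where
  "op_A \<kappa>t \<kappa> \<epsilon> f = (\<lambda>s. complex_of_real (\<kappa> / \<kappa>t) * f s + T0 \<epsilon> f s
      + complex_of_real (1 / \<kappa>) * T2_adj \<epsilon> (resolvent3 \<kappa> \<epsilon> (T2 \<epsilon> f)) s)"

definition bounded_on_L2 :: "((real \<Rightarrow> complex) \<Rightarrow> (real \<Rightarrow> complex)) \<Rightarrow> bool" where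
  "bounded_on_L2 A \<longleftrightarrow> (\<forall>f\<in>L2. A f \<in> L2) \<and> (\<exists>C. \<forall>f\<in>L2. L2norm (A f) \<le> C * L2norm f)"

definition boundedly_invertible_L2 :: "((real \<Rightarrow> complex) \<Rightarrow> (real \<Rightarrow> complex)) \<Rightarrow> bool" where
  "boundedly_invertible_L2 A \<longleftrightarrow> bounded_on_L2 A \<and>
     (\<exists>B. bounded_on_L2 B \<and>
          (\<forall>f\<in>L2. AE s in lborel. A (B f) s = f s) \<and>
          (\<forall>f\<in>L2. AE s in lborel. B (A f) s = f s))"

end

theory Submission
  imports Defs "HOL-Probability.Sinc_Integral"
begin

text \<open>The operator is \<open>q + P\<close> with the multiplication symbol
  \<open>q = \<kappa>/\<kappa>t + (s\<^sup>2 + 2\<epsilon>)\<^sup>-\<^sup>1\<^sup>/\<^sup>2\<close>, which lies between \<open>c = \<kappa>/\<kappa>t > 0\<close> and \<open>c + 1\<close>,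
  and \<open>P = T\<^sub>2\<^sup>* \<sigma> T\<^sub>2\<close> with \<open>\<sigma> = (\<kappa> - T\<^sub>3)\<^sup>-\<^sup>1\<close>. Since \<open>\<epsilon> > 1\<close>, the symbol of \<open>T\<^sub>3\<close> stays below
  \<open>1/2 < 1/\<surd>2 \<le> \<kappa>\<close>, so \<open>\<sigma>\<close> is positive and bounded; the kernel of \<open>T\<^sub>2\<close> is dominated by a
  product of integrable functions, so \<open>T\<^sub>2\<close> and \<open>T\<^sub>2\<^sup>*\<close> are bounded. Hence \<open>P\<close> is bounded and
  nonnegative, \<open>\<langle>P x, x\<rangle> = \<integral> \<sigma> |T\<^sub>2 x|\<^sup>2\<close>. For a small step \<open>\<tau>\<close> the preconditioned Richardson
  map \<open>K = 1 - \<tau> q\<^sup>-\<^sup>1 (q + P)\<close> is then a strict contraction in the weighted norm \<open>\<integral> q |x|\<^sup>2\<close>,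
  and the Neumann series \<open>\<tau> \<Sum>\<^sub>n K\<^sup>n q\<^sup>-\<^sup>1\<close> is a bounded two-sided inverse.\<close>

section \<open>Cauchy--Schwarz inequalities and series\<close>

lemma nonneg_quadratic_discriminant_le:
  fixes X P Y :: real
  assumes nonneg: "\<And>t. 0 \<le> X * t\<^sup>2 + 2 * P * t + Y" and "0 \<le> X"
  shows "P\<^sup>2 \<le> X * Y"
proof (cases "X = 0")
  case True
  show ?thesis
  proof (rule ccontr)
    assume "\<not> ?thesis"
    then have "P \<noteq> 0" using True by simp
    have "0 \<le> X * (-(Y + 1) / (2 * P))\<^sup>2 + 2 * P * (-(Y + 1) / (2 * P)) + Y" by (rule nonneg)
    then show False using True \<open>P \<noteq> 0\<close> by (simp add: field_simps)
  qed
next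
  case False
  with \<open>0 \<le> X\<close> have "X > 0" by simp
  have "0 \<le> X * (-P / X)\<^sup>2 + 2 * P * (-P / X) + Y" by (rule nonneg)
  also have "\<dots> = Y - P\<^sup>2 / X" using \<open>X > 0\<close> by (simp add: field_simps power2_eq_square)
  finally show ?thesis using \<open>X > 0\<close> by (simp add: field_simps)
qed

lemma abs_mult_le_sum_squares: "\<bar>x * y\<bar> \<le> x\<^sup>2 + (y::real)\<^sup>2"
proof -
  have "2 * \<bar>x\<bar> * \<bar>y\<bar> \<le> x\<^sup>2 + y\<^sup>2" using sum_squares_bound[of "\<bar>x\<bar>" "\<bar>y\<bar>"] by simp
  moreover have "0 \<le> \<bar>x\<bar> * \<bar>y\<bar>" by simp
  ultimately show ?thesis unfolding abs_mult by linarith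
qed

lemma Cauchy_Schwarz_integral:
  fixes f g :: "'a \<Rightarrow> real"
  assumes [measurable]: "f \<in> borel_measurable M" "g \<in> borel_measurable M"
    and f2: "integrable M (\<lambda>x. (f x)\<^sup>2)" and g2: "integrable M (\<lambda>x. (g x)\<^sup>2)"
  shows "integrable M (\<lambda>x. f x * g x)"
    and "(\<integral>x. f x * g x \<partial>M)\<^sup>2 \<le> (\<integral>x. (f x)\<^sup>2 \<partial>M) * (\<integral>x. (g x)\<^sup>2 \<partial>M)"
proof -
  show fg: "integrable M (\<lambda>x. f x * g x)"
  proof (rule Bochner_Integration.integrable_bound[OF Bochner_Integration.integrable_add[OF f2 g2]])
    show "AE x in M. norm (f x * g x) \<le> norm ((f x)\<^sup>2 + (g x)\<^sup>2)"
      using abs_mult_le_sum_squares by auto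
  qed measurable
  have "0 \<le> (\<integral>x. (f x)\<^sup>2 \<partial>M) * t\<^sup>2 + 2 * (\<integral>x. f x * g x \<partial>M) * t + (\<integral>x. (g x)\<^sup>2 \<partial>M)" for t
  proof -
    have "(\<integral>x. (t * f x + g x)\<^sup>2 \<partial>M)
        = (\<integral>x. t\<^sup>2 * (f x)\<^sup>2 + (2 * t) * (f x * g x) + (g x)\<^sup>2 \<partial>M)"
      by (rule Bochner_Integration.integral_cong) (auto simp: power2_eq_square algebra_simps)
    also have "\<dots> = t\<^sup>2 * (\<integral>x. (f x)\<^sup>2 \<partial>M) + (2 * t) * (\<integral>x. f x * g x \<partial>M) + (\<integral>x. (g x)\<^sup>2 \<partial>M)"
      using f2 g2 fg by simp
    finally have "(\<integral>x. (t * f x + g x)\<^sup>2 \<partial>M)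
        = (\<integral>x. (f x)\<^sup>2 \<partial>M) * t\<^sup>2 + 2 * (\<integral>x. f x * g x \<partial>M) * t + (\<integral>x. (g x)\<^sup>2 \<partial>M)"
      by (simp only: ac_simps)
    moreover have "0 \<le> (\<integral>x. (t * f x + g x)\<^sup>2 \<partial>M)" by simp
    ultimately show ?thesis by simp
  qed
  then show "(\<integral>x. f x * g x \<partial>M)\<^sup>2 \<le> (\<integral>x. (f x)\<^sup>2 \<partial>M) * (\<integral>x. (g x)\<^sup>2 \<partial>M)"
    by (rule nonneg_quadratic_discriminant_le) simp
qed

lemma Cauchy_Schwarz_suminf:
  fixes a b :: "nat \<Rightarrow> real"
  assumes a: "summable (\<lambda>n. (a n)\<^sup>2)" and b: "summable (\<lambda>n. (b n)\<^sup>2)"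
  shows "summable (\<lambda>n. a n * b n)"
    and "(\<Sum>n. a n * b n)\<^sup>2 \<le> (\<Sum>n. (a n)\<^sup>2) * (\<Sum>n. (b n)\<^sup>2)"
proof -
  have sq: "integrable (count_space UNIV) (\<lambda>n. (u n)\<^sup>2)" if "summable (\<lambda>n. (u n)\<^sup>2)" for u :: "nat \<Rightarrow> real"
    using that by (simp add: integrable_count_space_nat_iff)
  note CS = Cauchy_Schwarz_integral[OF _ _ sq[OF a] sq[OF b]]
  show "summable (\<lambda>n. a n * b n)"
    using CS(1) by (auto simp: integrable_count_space_nat_iff intro: summable_norm_cancel)
  show "(\<Sum>n. a n * b n)\<^sup>2 \<le> (\<Sum>n. (a n)\<^sup>2) * (\<Sum>n. (b n)\<^sup>2)"
    using CS(2) by (simp add: integral_count_space_nat[OF CS(1)] integral_count_space_nat[OF sq[OF a]]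
        integral_count_space_nat[OF sq[OF b]])
qed

lemma summable_weighted_square_imp_summable:
  fixes u :: "nat \<Rightarrow> real" and w :: real
  assumes w: "0 < w" "w < 1"
    and sq: "summable (\<lambda>n. (u n)\<^sup>2 / w ^ n)"
  shows "summable u" and "(\<Sum>n. u n)\<^sup>2 \<le> (\<Sum>n. (u n)\<^sup>2 / w ^ n) / (1 - w)"
proof -
  define a where "a n = u n / sqrt (w ^ n)" for n
  define b where "b n = sqrt (w ^ n)" for n
  have ab: "u = (\<lambda>n. a n * b n)" using w by (simp add: a_def b_def fun_eq_iff)
  have a2: "(\<lambda>n. (a n)\<^sup>2) = (\<lambda>n. (u n)\<^sup>2 / w ^ n)" using w by (simp add: a_def power_divide)
  have b2: "(\<lambda>n. (b n)\<^sup>2) = (\<lambda>n. w ^ n)" using w by (simp add: b_def)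
  note CS = Cauchy_Schwarz_suminf[of a b, unfolded a2 b2 ab[symmetric], OF sq summable_geometric]
  show "summable u" by (rule CS(1)) (use w in simp)
  show "(\<Sum>n. u n)\<^sup>2 \<le> (\<Sum>n. (u n)\<^sup>2 / w ^ n) / (1 - w)"
    using CS(2) w by (simp add: suminf_geometric divide_simps)
qed

lemma suminf_telescope_of_summable:
  fixes h :: "nat \<Rightarrow> 'a::banach"
  assumes "summable (\<lambda>n. norm (h n))"
  shows "(\<Sum>n. h n - h (Suc n)) = h 0"
proof -
  have "h \<longlonglongrightarrow> 0" by (rule summable_LIMSEQ_zero[OF summable_norm_cancel[OF assms]])
  from telescope_sums'[OF this] show ?thesis by (simp add: sums_iff)
qed

lemma summable_integrals_imp_AE_summable:
  fixes f :: "nat \<Rightarrow> 'a \<Rightarrow> real"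
  assumes [measurable]: "\<And>n. f n \<in> borel_measurable M"
    and f_nonneg: "\<And>n x. 0 \<le> f n x" and f_int: "\<And>n. integrable M (f n)"
    and sum_int: "summable (\<lambda>n. integral\<^sup>L M (f n))"
  shows "AE x in M. summable (\<lambda>n. f n x)"
    and "integrable M (\<lambda>x. \<Sum>n. f n x)"
    and "(\<integral>x. (\<Sum>n. f n x) \<partial>M) = (\<Sum>n. integral\<^sup>L M (f n))"
proof -
  have int_nonneg: "0 \<le> integral\<^sup>L M (f n)" for n by (simp add: f_nonneg)
  have "(\<integral>\<^sup>+x. (\<Sum>n. ennreal (f n x)) \<partial>M) = (\<Sum>n. \<integral>\<^sup>+x. ennreal (f n x) \<partial>M)"
    by (rule nn_integral_suminf) measurable
  also have "\<dots> = (\<Sum>n. ennreal (integral\<^sup>L M (f n)))"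
    by (subst nn_integral_eq_integral[OF f_int]) (auto simp: f_nonneg)
  also have "\<dots> = ennreal (\<Sum>n. integral\<^sup>L M (f n))"
    by (rule suminf_ennreal2[OF int_nonneg sum_int])
  finally have "(\<integral>\<^sup>+x. (\<Sum>n. ennreal (f n x)) \<partial>M) \<noteq> \<infinity>" by simp
  then have "AE x in M. (\<Sum>n. ennreal (f n x)) \<noteq> \<infinity>"
    by (intro nn_integral_noteq_infinite) measurable
  then show AE: "AE x in M. summable (\<lambda>n. f n x)"
    by eventually_elim (rule summable_suminf_not_top[OF f_nonneg], simp)
  show "integrable M (\<lambda>x. \<Sum>n. f n x)"
    by (rule integrable_suminf[OF f_int]) (use AE sum_int f_nonneg in auto)
  show "(\<integral>x. (\<Sum>n. f n x) \<partial>M) = (\<Sum>n. integral\<^sup>L M (f n))"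
    by (rule integral_suminf[OF f_int]) (use AE sum_int f_nonneg in auto)
qed

section \<open>Square-integrable functions\<close>

lemma borel_measurable_cnj[measurable (raw)]:
  "f \<in> borel_measurable M \<Longrightarrow> (\<lambda>x. cnj (f x)) \<in> borel_measurable M"
  by (rule borel_measurable_continuous_on[where f = cnj]) (auto intro: continuous_intros)

definition L2sq :: "(real \<Rightarrow> complex) \<Rightarrow> real" where
  "L2sq x = (\<integral>s. (cmod (x s))\<^sup>2 \<partial>lborel)"

lemma L2sq_nonneg: "0 \<le> L2sq x"
  unfolding L2sq_def by simp

lemma L2norm_eq_sqrt_L2sq: "L2norm x = sqrt (L2sq x)"
  by (simp add: L2norm_def L2sq_def)

lemma L2_borel_measurable: "x \<in> L2 \<Longrightarrow> x \<in> borel_measurable lborel"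
  by (simp add: L2_def)

lemma L2_integrable_square: "x \<in> L2 \<Longrightarrow> integrable lborel (\<lambda>s. (cmod (x s))\<^sup>2)"
  by (simp add: L2_def)

lemma L2I:
  "x \<in> borel_measurable lborel \<Longrightarrow> integrable lborel (\<lambda>s. (cmod (x s))\<^sup>2) \<Longrightarrow> x \<in> L2"
  by (simp add: L2_def)

lemma L2_dominated:
  assumes [measurable]: "y \<in> borel_measurable lborel" and x: "x \<in> L2"
    and le: "\<And>s. cmod (y s) \<le> B * cmod (x s)"
  shows "y \<in> L2" and "L2sq y \<le> B\<^sup>2 * L2sq x"
proof -
  have le2: "(cmod (y s))\<^sup>2 \<le> B\<^sup>2 * (cmod (x s))\<^sup>2" for s
    using le[of s] norm_ge_zero[of "y s"] by (metis power_mono power_mult_distrib)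
  have bound: "integrable lborel (\<lambda>s. B\<^sup>2 * (cmod (x s))\<^sup>2)"
    using L2_integrable_square[OF x] by simp
  have int: "integrable lborel (\<lambda>s. (cmod (y s))\<^sup>2)"
    by (rule Bochner_Integration.integrable_bound[OF bound]) (use le2 in auto)
  show "y \<in> L2" by (rule L2I[OF _ int]) simp
  have "L2sq y \<le> (\<integral>s. B\<^sup>2 * (cmod (x s))\<^sup>2 \<partial>lborel)"
    unfolding L2sq_def by (rule integral_mono[OF int bound le2])
  then show "L2sq y \<le> B\<^sup>2 * L2sq x" by (simp add: L2sq_def)
qed

lemma L2_add:
  assumes x: "x \<in> L2" and y: "y \<in> L2"
  shows "(\<lambda>s. x s + y s) \<in> L2" and "L2sq (\<lambda>s. x s + y s) \<le> 2 * L2sq x + 2 * L2sq y"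
proof -
  have [measurable]: "x \<in> borel_measurable lborel" "y \<in> borel_measurable lborel"
    using x y by (blast intro: L2_borel_measurable)+
  have le: "(cmod (x s + y s))\<^sup>2 \<le> 2 * (cmod (x s))\<^sup>2 + 2 * (cmod (y s))\<^sup>2" for s
  proof -
    have "(cmod (x s + y s))\<^sup>2 \<le> (cmod (x s) + cmod (y s))\<^sup>2"
      by (intro power_mono norm_triangle_ineq) simp
    also have "\<dots> \<le> 2 * (cmod (x s))\<^sup>2 + 2 * (cmod (y s))\<^sup>2"
      using sum_squares_bound[of "cmod (x s)" "cmod (y s)"] by (simp add: power2_sum)
    finally show ?thesis .
  qed
  have bound: "integrable lborel (\<lambda>s. 2 * (cmod (x s))\<^sup>2 + 2 * (cmod (y s))\<^sup>2)"
    using L2_integrable_square[OF x] L2_integrable_square[OF y] by simp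
  have int: "integrable lborel (\<lambda>s. (cmod (x s + y s))\<^sup>2)"
    by (rule Bochner_Integration.integrable_bound[OF bound]) (use le in auto)
  show "(\<lambda>s. x s + y s) \<in> L2" by (rule L2I[OF _ int]) simp
  have "L2sq (\<lambda>s. x s + y s) \<le> (\<integral>s. 2 * (cmod (x s))\<^sup>2 + 2 * (cmod (y s))\<^sup>2 \<partial>lborel)"
    unfolding L2sq_def by (rule integral_mono[OF int bound le])
  then show "L2sq (\<lambda>s. x s + y s) \<le> 2 * L2sq x + 2 * L2sq y"
    using L2_integrable_square[OF x] L2_integrable_square[OF y] by (simp add: L2sq_def)
qed

lemma L2_mult_integrable:
  fixes g :: "real \<Rightarrow> real"
  assumes x: "x \<in> L2" and [measurable]: "g \<in> borel_measurable lborel"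
    and g2: "integrable lborel (\<lambda>t. (g t)\<^sup>2)"
  shows "integrable lborel (\<lambda>t. \<bar>g t\<bar> * cmod (x t))"
    and "integrable lborel (\<lambda>t. complex_of_real (g t) * x t)"
    and "(\<integral>t. \<bar>g t\<bar> * cmod (x t) \<partial>lborel)\<^sup>2 \<le> (\<integral>t. (g t)\<^sup>2 \<partial>lborel) * L2sq x"
proof -
  have [measurable]: "x \<in> borel_measurable lborel" using x by (rule L2_borel_measurable)
  note CS = Cauchy_Schwarz_integral[of "\<lambda>t. \<bar>g t\<bar>" lborel "\<lambda>t. cmod (x t)"]
  show int: "integrable lborel (\<lambda>t. \<bar>g t\<bar> * cmod (x t))"
    by (rule CS(1)) (use g2 L2_integrable_square[OF x] in simp_all)
  show "(\<integral>t. \<bar>g t\<bar> * cmod (x t) \<partial>lborel)\<^sup>2 \<le> (\<integral>t. (g t)\<^sup>2 \<partial>lborel) * L2sq x"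
    using CS(2) x g2 L2_integrable_square[OF x] by (simp add: L2sq_def)
  show "integrable lborel (\<lambda>t. complex_of_real (g t) * x t)"
    by (rule Bochner_Integration.integrable_bound[OF int]) (auto simp: norm_mult)
qed

lemma L2_inner_integrable:
  assumes x: "x \<in> L2" and y: "y \<in> L2"
  shows "integrable lborel (\<lambda>s. x s * cnj (y s))"
proof (rule Bochner_Integration.integrable_bound)
  show "integrable lborel (\<lambda>s. (cmod (x s))\<^sup>2 + (cmod (y s))\<^sup>2)"
    using L2_integrable_square[OF x] L2_integrable_square[OF y] by simp
  show "AE s in lborel. norm (x s * cnj (y s)) \<le> norm ((cmod (x s))\<^sup>2 + (cmod (y s))\<^sup>2)"
    using abs_mult_le_sum_squares[of "cmod (x _)" "cmod (y _)"] by (auto simp: norm_mult)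
qed (use x y L2_borel_measurable in measurable)

lemma weighted_square_suminf_integrable:
  assumes xs: "\<And>n. xs n \<in> L2" and decay: "\<And>n. L2sq (xs n) \<le> C * w ^ n * w ^ n"
    and w: "0 < w" "w < 1"
  shows "AE t in lborel. summable (\<lambda>n. (cmod (xs n t))\<^sup>2 / w ^ n)"
    and "integrable lborel (\<lambda>t. \<Sum>n. (cmod (xs n t))\<^sup>2 / w ^ n)"
    and "(\<integral>t. (\<Sum>n. (cmod (xs n t))\<^sup>2 / w ^ n) \<partial>lborel) \<le> C / (1 - w)"
proof -
  have [measurable]: "xs n \<in> borel_measurable lborel" for n using xs by (rule L2_borel_measurable)
  define f where "f n t = (cmod (xs n t))\<^sup>2 / w ^ n" for n t
  have f_meas: "f n \<in> borel_measurable lborel" for n unfolding f_def by measurable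
  have f_nonneg: "0 \<le> f n t" for n t using w by (simp add: f_def)
  have f_int: "integrable lborel (f n)" for n
    unfolding f_def using L2_integrable_square[OF xs] by simp
  have f_le: "integral\<^sup>L lborel (f n) \<le> C * w ^ n" for n
    using decay[of n] w by (simp add: f_def[abs_def] L2sq_def divide_simps)
  have geom: "summable (\<lambda>n. C * w ^ n)" using w by (intro summable_mult summable_geometric) simp
  have sum_int: "summable (\<lambda>n. integral\<^sup>L lborel (f n))"
    by (rule summable_comparison_test[OF _ geom]) (use f_le f_nonneg in auto)
  note F = summable_integrals_imp_AE_summable[OF f_meas f_nonneg f_int sum_int, unfolded f_def]
  show "AE t in lborel. summable (\<lambda>n. (cmod (xs n t))\<^sup>2 / w ^ n)" by (rule F(1))
  show "integrable lborel (\<lambda>t. \<Sum>n. (cmod (xs n t))\<^sup>2 / w ^ n)" by (rule F(2))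
  have "(\<Sum>n. integral\<^sup>L lborel (f n)) \<le> (\<Sum>n. C * w ^ n)" by (rule suminf_le[OF f_le sum_int geom])
  also have "\<dots> = C / (1 - w)" using w by (simp add: suminf_mult suminf_geometric)
  finally show "(\<integral>t. (\<Sum>n. (cmod (xs n t))\<^sup>2 / w ^ n) \<partial>lborel) \<le> C / (1 - w)"
    using F(3) by (simp add: f_def[abs_def])
qed

lemma L2_suminf:
  assumes xs: "\<And>n. xs n \<in> L2" and decay: "\<And>n. L2sq (xs n) \<le> C * r ^ n"
    and r: "0 < r" "r < 1"
  shows "AE t in lborel. summable (\<lambda>n. cmod (xs n t))"
    and "(\<lambda>t. \<Sum>n. xs n t) \<in> L2"
    and "L2sq (\<lambda>t. \<Sum>n. xs n t) \<le> C / (1 - sqrt r)\<^sup>2"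
proof -
  have [measurable]: "xs n \<in> borel_measurable lborel" for n using xs by (rule L2_borel_measurable)
  \<comment> \<open>with the weights \<open>w^-n\<close>, \<open>w = sqrt r\<close>, both Cauchy--Schwarz factors stay geometric\<close>
  define w where "w = sqrt r"
  have w: "0 < w" "w < 1" "r ^ n = w ^ n * w ^ n" for n
    using r by (auto simp: w_def power_mult_distrib[symmetric])
  define F where "F t = (\<Sum>n. (cmod (xs n t))\<^sup>2 / w ^ n)" for t
  have "L2sq (xs n) \<le> C * w ^ n * w ^ n" for n using decay[of n] by (simp add: w(3) mult.assoc)
  note W = weighted_square_suminf_integrable[OF xs this w(1,2), folded F_def]
  have pointwise: "AE t in lborel. summable (\<lambda>n. cmod (xs n t))
      \<and> (cmod (\<Sum>n. xs n t))\<^sup>2 \<le> F t / (1 - w) \<and> 0 \<le> F t"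
    using W(1)
  proof eventually_elim
    case (elim t)
    note S = summable_weighted_square_imp_summable[OF w(1,2) elim]
    have "(cmod (\<Sum>n. xs n t))\<^sup>2 \<le> (\<Sum>n. cmod (xs n t))\<^sup>2"
      by (intro power_mono summable_norm[OF S(1)]) simp
    also have "\<dots> \<le> F t / (1 - w)" using S(2) by (simp add: F_def)
    finally have "(cmod (\<Sum>n. xs n t))\<^sup>2 \<le> F t / (1 - w)" .
    moreover have "0 \<le> F t" unfolding F_def using w(1) by (intro suminf_nonneg[OF elim]) simp
    ultimately show ?case using S(1) by simp
  qed
  then show "AE t in lborel. summable (\<lambda>n. cmod (xs n t))" by auto
  have bound: "integrable lborel (\<lambda>t. F t / (1 - w))"
    using W(2) by simp
  have int: "integrable lborel (\<lambda>t. (cmod (\<Sum>n. xs n t))\<^sup>2)"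
  proof (rule Bochner_Integration.integrable_bound[OF bound])
    show "AE t in lborel. norm ((cmod (\<Sum>n. xs n t))\<^sup>2) \<le> norm (F t / (1 - w))"
      using pointwise by eventually_elim (use w in auto)
  qed measurable
  show "(\<lambda>t. \<Sum>n. xs n t) \<in> L2" by (rule L2I[OF _ int]) measurable
  have "L2sq (\<lambda>t. \<Sum>n. xs n t) \<le> (\<integral>t. F t / (1 - w) \<partial>lborel)"
    unfolding L2sq_def by (rule integral_mono_AE[OF int bound]) (use pointwise in auto)
  also have "\<dots> \<le> C / (1 - w) / (1 - w)"
    using divide_right_mono[OF W(3), of "1 - w"] w by simp
  also have "\<dots> = C / (1 - sqrt r)\<^sup>2" by (simp add: w_def power2_eq_square)
  finally show "L2sq (\<lambda>t. \<Sum>n. xs n t) \<le> C / (1 - sqrt r)\<^sup>2" .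
qed

section \<open>Integral operators with product-dominated kernels\<close>

lemma int_op_scale: "int_op k (\<lambda>t. c * x t) s = c * int_op k x s"
  unfolding int_op_def by (simp add: ac_simps)

locale dominated_kernel =
  fixes k :: "real \<Rightarrow> real \<Rightarrow> real" and a b :: "real \<Rightarrow> real"
  assumes k_measurable[measurable]: "(\<lambda>(s, t). k s t) \<in> borel_measurable (lborel \<Otimes>\<^sub>M lborel)"
    and k_square_le: "\<And>s t. (k s t)\<^sup>2 \<le> a t * b s"
    and a_nonneg: "\<And>t. 0 \<le> a t" and b_nonneg: "\<And>s. 0 \<le> b s"
    and a_integrable: "integrable lborel a" and b_integrable: "integrable lborel b"
begin

definition kernel_bound :: real where
  "kernel_bound = integral\<^sup>L lborel a * integral\<^sup>L lborel b"

lemma kernel_bound_nonneg: "0 \<le> kernel_bound"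
  unfolding kernel_bound_def by (simp add: a_nonneg b_nonneg)

lemma row_measurable[measurable]: "(\<lambda>t. k s t) \<in> borel_measurable lborel"
  using measurable_Pair2[OF k_measurable, of s] by simp

lemma row_square_integrable: "integrable lborel (\<lambda>t. (k s t)\<^sup>2)"
proof (rule Bochner_Integration.integrable_bound)
  show "integrable lborel (\<lambda>t. b s * a t)" using a_integrable by simp
  show "AE t in lborel. norm ((k s t)\<^sup>2) \<le> norm (b s * a t)"
    using k_square_le a_nonneg b_nonneg by (auto simp: mult.commute)
qed measurable

lemma row_integrable: "x \<in> L2 \<Longrightarrow> integrable lborel (\<lambda>t. complex_of_real (k s t) * x t)"
  by (rule L2_mult_integrable(2)[OF _ _ row_square_integrable]) auto

lemma integral_abs_row_le:
  assumes x: "x \<in> L2"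
  shows "(\<integral>t. \<bar>k s t\<bar> * cmod (x t) \<partial>lborel) \<le> sqrt (b s * integral\<^sup>L lborel a * L2sq x)"
proof -
  have "(\<integral>t. (k s t)\<^sup>2 \<partial>lborel) \<le> (\<integral>t. b s * a t \<partial>lborel)"
    by (rule integral_mono[OF row_square_integrable]) (use a_integrable k_square_le in \<open>auto simp: mult.commute\<close>)
  then have row: "(\<integral>t. (k s t)\<^sup>2 \<partial>lborel) \<le> b s * integral\<^sup>L lborel a" by simp
  have "(\<integral>t. \<bar>k s t\<bar> * cmod (x t) \<partial>lborel)\<^sup>2 \<le> (\<integral>t. (k s t)\<^sup>2 \<partial>lborel) * L2sq x"
    by (rule L2_mult_integrable(3)[OF x _ row_square_integrable]) simp
  also have "\<dots> \<le> b s * integral\<^sup>L lborel a * L2sq x"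
    by (rule mult_right_mono[OF row L2sq_nonneg])
  finally show ?thesis by (rule real_le_rsqrt)
qed

lemma norm_int_op_le:
  assumes x: "x \<in> L2"
  shows "cmod (int_op k x s) \<le> sqrt (b s * integral\<^sup>L lborel a * L2sq x)"
proof -
  have "cmod (int_op k x s) \<le> (\<integral>t. norm (complex_of_real (k s t) * x t) \<partial>lborel)"
    unfolding int_op_def by (rule integral_norm_bound)
  also have "\<dots> = (\<integral>t. \<bar>k s t\<bar> * cmod (x t) \<partial>lborel)" by (simp add: norm_mult)
  also have "\<dots> \<le> sqrt (b s * integral\<^sup>L lborel a * L2sq x)" by (rule integral_abs_row_le[OF x])
  finally show ?thesis .
qed

lemma int_op_measurable[measurable]:
  assumes "x \<in> L2"
  shows "int_op k x \<in> borel_measurable lborel"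
proof -
  have [measurable]: "x \<in> borel_measurable lborel" using assms by (rule L2_borel_measurable)
  show ?thesis unfolding int_op_def by (rule lborel.borel_measurable_lebesgue_integral) measurable
qed

lemma int_op_L2: "x \<in> L2 \<Longrightarrow> int_op k x \<in> L2"
  and L2sq_int_op_le: "x \<in> L2 \<Longrightarrow> L2sq (int_op k x) \<le> kernel_bound * L2sq x"
proof -
  assume x: "x \<in> L2"
  define C where "C = integral\<^sup>L lborel a * L2sq x"
  have C: "0 \<le> C" unfolding C_def using a_nonneg L2sq_nonneg by simp
  have le: "(cmod (int_op k x s))\<^sup>2 \<le> b s * C" for s
    using norm_int_op_le[OF x, of s] b_nonneg[of s] C
    by (metis norm_ge_zero power_mono real_sqrt_pow2 zero_le_mult_iff C_def mult.assoc)
  have bound: "integrable lborel (\<lambda>s. b s * C)" using b_integrable by simp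
  have int: "integrable lborel (\<lambda>s. (cmod (int_op k x s))\<^sup>2)"
    by (rule Bochner_Integration.integrable_bound[OF bound]) (use x le b_nonneg C in auto)
  show "int_op k x \<in> L2" by (rule L2I[OF _ int]) (use x in simp)
  have "L2sq (int_op k x) \<le> (\<integral>s. b s * C \<partial>lborel)"
    unfolding L2sq_def by (rule integral_mono[OF int bound le])
  then show "L2sq (int_op k x) \<le> kernel_bound * L2sq x"
    by (simp add: kernel_bound_def C_def mult_ac)
qed

lemma int_op_diff:
  "x \<in> L2 \<Longrightarrow> y \<in> L2 \<Longrightarrow> int_op k (\<lambda>t. x t - y t) s = int_op k x s - int_op k y s"
  unfolding int_op_def by (simp add: right_diff_distrib Bochner_Integration.integral_diff[OF row_integrable row_integrable])

lemma summable_integral_abs_row: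
  assumes xs: "\<And>n. xs n \<in> L2" and decay: "\<And>n. L2sq (xs n) \<le> C * r ^ n"
    and r: "0 \<le> r" "r < 1"
  shows "summable (\<lambda>n. \<integral>t. \<bar>k s t\<bar> * cmod (xs n t) \<partial>lborel)"
proof (rule summable_comparison_test)
  show "summable (\<lambda>n. sqrt (b s * integral\<^sup>L lborel a * C) * sqrt r ^ n)"
    using r by (intro summable_mult summable_geometric) (simp add: real_sqrt_lt_1_iff)
  have "(\<integral>t. \<bar>k s t\<bar> * cmod (xs n t) \<partial>lborel) \<le> sqrt (b s * integral\<^sup>L lborel a * C) * sqrt r ^ n" for n
  proof -
    have "(\<integral>t. \<bar>k s t\<bar> * cmod (xs n t) \<partial>lborel) \<le> sqrt (b s * integral\<^sup>L lborel a * L2sq (xs n))"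
      by (rule integral_abs_row_le[OF xs])
    also have "\<dots> \<le> sqrt (b s * integral\<^sup>L lborel a * (C * r ^ n))"
      using decay[of n] b_nonneg a_nonneg by (intro real_sqrt_le_mono mult_left_mono) auto
    finally show ?thesis by (simp add: real_sqrt_mult real_sqrt_power mult.assoc)
  qed
  then show "\<exists>N. \<forall>n\<ge>N. norm (\<integral>t. \<bar>k s t\<bar> * cmod (xs n t) \<partial>lborel)
      \<le> sqrt (b s * integral\<^sup>L lborel a * C) * sqrt r ^ n" by simp
qed

lemma int_op_suminf:
  assumes xs: "\<And>n. xs n \<in> L2" and decay: "\<And>n. L2sq (xs n) \<le> C * r ^ n"
    and r: "0 < r" "r < 1"
  shows "summable (\<lambda>n. cmod (int_op k (xs n) s))"
    and "int_op k (\<lambda>t. \<Sum>n. xs n t) s = (\<Sum>n. int_op k (xs n) s)"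
proof -
  define f where "f n t = complex_of_real (k s t) * xs n t" for n t
  have f_int: "integrable lborel (f n)" for n unfolding f_def by (rule row_integrable[OF xs])
  have sum_norm_f: "summable (\<lambda>n. \<integral>t. norm (f n t) \<partial>lborel)"
    using summable_integral_abs_row[OF xs decay less_imp_le[OF r(1)] r(2)] by (simp add: f_def norm_mult)
  show "summable (\<lambda>n. cmod (int_op k (xs n) s))"
    by (rule summable_comparison_test[OF _ sum_norm_f])
       (auto simp: int_op_def f_def intro!: integral_norm_bound)
  have AE_sum: "AE t in lborel. summable (\<lambda>n. cmod (xs n t))"
    by (rule L2_suminf(1)[OF xs decay r])
  then have AE_sum_f: "AE t in lborel. summable (\<lambda>n. norm (f n t))"
    by eventually_elim (simp add: f_def norm_mult summable_mult)
  have "int_op k (\<lambda>t. \<Sum>n. xs n t) s = (\<integral>t. (\<Sum>n. f n t) \<partial>lborel)"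
    unfolding int_op_def
  proof (rule integral_cong_AE)
    show "AE t in lborel. complex_of_real (k s t) * (\<Sum>n. xs n t) = (\<Sum>n. f n t)"
      using AE_sum by eventually_elim (simp add: f_def suminf_mult summable_norm_cancel)
  qed (use xs L2_borel_measurable in \<open>auto simp: f_def\<close>)
  also have "\<dots> = (\<Sum>n. integral\<^sup>L lborel (f n))"
    by (rule integral_suminf[OF f_int AE_sum_f sum_norm_f])
  finally show "int_op k (\<lambda>t. \<Sum>n. xs n t) s = (\<Sum>n. int_op k (xs n) s)"
    by (simp add: f_def[abs_def] int_op_def)
qed

lemma kernel_product_integrable:
  assumes x: "x \<in> L2" and z: "z \<in> L2"
  shows "integrable (lborel \<Otimes>\<^sub>M lborel) (\<lambda>(s, t). complex_of_real (k s t) * z t * cnj (x s))"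
proof -
  have [measurable]: "x \<in> borel_measurable lborel" "z \<in> borel_measurable lborel"
    using x z by (blast intro: L2_borel_measurable)+
  define F where "F s t = complex_of_real (k s t) * z t * cnj (x s)" for s t
  have F_measurable[measurable]: "(\<lambda>(s, t). F s t) \<in> borel_measurable (lborel \<Otimes>\<^sub>M lborel)"
    unfolding F_def by measurable
  define g where "g s = sqrt (b s * integral\<^sup>L lborel a * L2sq z)" for s
  have g_nonneg: "0 \<le> g s" for s unfolding g_def using a_nonneg b_nonneg L2sq_nonneg by simp
  have g_int: "integrable lborel (\<lambda>s. \<bar>g s\<bar> * cmod (x s))"
    by (rule L2_mult_integrable(1)[OF x]) (use b_integrable b_nonneg a_nonneg L2sq_nonneg in \<open>simp_all add: g_def\<close>)
  have "integrable lborel (\<lambda>s. \<integral>t. norm (F s t) \<partial>lborel)"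
  proof (rule Bochner_Integration.integrable_bound[OF g_int])
    show "(\<lambda>s. \<integral>t. norm (F s t) \<partial>lborel) \<in> borel_measurable lborel"
      by (rule lborel.borel_measurable_lebesgue_integral) measurable
    show "AE s in lborel. norm (\<integral>t. norm (F s t) \<partial>lborel) \<le> norm (\<bar>g s\<bar> * cmod (x s))"
    proof (rule AE_I2)
      fix s
      have "(\<integral>t. norm (F s t) \<partial>lborel) = cmod (x s) * (\<integral>t. \<bar>k s t\<bar> * cmod (z t) \<partial>lborel)"
        by (simp add: F_def norm_mult ac_simps)
      also have "\<dots> \<le> cmod (x s) * g s"
        unfolding g_def by (rule mult_left_mono[OF integral_abs_row_le[OF z] norm_ge_zero])
      finally show "norm (\<integral>t. norm (F s t) \<partial>lborel) \<le> norm (\<bar>g s\<bar> * cmod (x s))"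
        using g_nonneg[of s] by (simp add: mult.commute)
    qed
  qed
  moreover have "AE s in lborel. integrable lborel (\<lambda>t. F s t)"
    using row_integrable[OF z] by (simp add: F_def)
  ultimately show ?thesis unfolding F_def[symmetric]
    by (intro lborel_pair.Fubini_integrable) simp_all
qed

lemma int_op_adjoint:
  assumes x: "x \<in> L2" and z: "z \<in> L2"
  shows "(\<integral>s. int_op k z s * cnj (x s) \<partial>lborel) = (\<integral>t. z t * cnj (int_op (\<lambda>t s. k s t) x t) \<partial>lborel)"
proof -
  define F where "F s t = complex_of_real (k s t) * z t * cnj (x s)" for s t
  have F_int: "integrable (lborel \<Otimes>\<^sub>M lborel) (\<lambda>(s, t). F s t)"
    unfolding F_def by (rule kernel_product_integrable[OF x z])
  have "(\<integral>s. int_op k z s * cnj (x s) \<partial>lborel) = (\<integral>s. \<integral>t. F s t \<partial>lborel \<partial>lborel)"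
    by (simp add: int_op_def F_def)
  also have "\<dots> = (\<integral>t. \<integral>s. F s t \<partial>lborel \<partial>lborel)"
    by (rule lborel_pair.Fubini_integral[OF F_int, symmetric])
  also have "\<dots> = (\<integral>t. z t * cnj (int_op (\<lambda>t s. k s t) x t) \<partial>lborel)"
  proof (rule Bochner_Integration.integral_cong[OF refl])
    fix t
    have "cnj (int_op (\<lambda>t s. k s t) x t) = (\<integral>s. cnj (complex_of_real (k s t) * x s) \<partial>lborel)"
      unfolding int_op_def by (rule Bochner_Integration.integral_cnj[symmetric])
    then show "(\<integral>s. F s t \<partial>lborel) = z t * cnj (int_op (\<lambda>t s. k s t) x t)"
      by (simp add: F_def ac_simps)
  qed
  finally show ?thesis .
qed

end

lemma dominated_kernel_transpose:
  "dominated_kernel k a b \<Longrightarrow> dominated_kernel (\<lambda>s t. k t s) b a"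
  unfolding dominated_kernel_def
  using measurable_pair_swap[of "\<lambda>(s, t). k s t" lborel lborel borel]
  by (auto simp: mult.commute)

section \<open>Inverting a coercive multiplication plus a positive perturbation\<close>

definition sandwich_op ::
    "(real \<Rightarrow> real \<Rightarrow> real) \<Rightarrow> (real \<Rightarrow> real) \<Rightarrow> (real \<Rightarrow> complex) \<Rightarrow> (real \<Rightarrow> complex)" where
  "sandwich_op k \<sigma> x = int_op (\<lambda>s t. k t s) (\<lambda>t. complex_of_real (\<sigma> t) * int_op k x t)"

definition perturbed_op :: "(real \<Rightarrow> real \<Rightarrow> real) \<Rightarrow> (real \<Rightarrow> real) \<Rightarrow> (real \<Rightarrow> real)
    \<Rightarrow> (real \<Rightarrow> complex) \<Rightarrow> (real \<Rightarrow> complex)" where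
  "perturbed_op k q \<sigma> x = (\<lambda>s. complex_of_real (q s) * x s + sandwich_op k \<sigma> x s)"

lemma bounded_on_L2I:
  assumes "\<And>f. f \<in> L2 \<Longrightarrow> A f \<in> L2" and "\<And>f. f \<in> L2 \<Longrightarrow> L2sq (A f) \<le> K * L2sq f"
  shows "bounded_on_L2 A"
  unfolding bounded_on_L2_def
proof (intro conjI ballI exI)
  fix f assume f: "f \<in> L2"
  show "A f \<in> L2" by (rule assms(1)[OF f])
  have "L2norm (A f) \<le> sqrt (K * L2sq f)"
    unfolding L2norm_eq_sqrt_L2sq using assms(2)[OF f] by simp
  then show "L2norm (A f) \<le> sqrt K * L2norm f"
    by (simp add: L2norm_eq_sqrt_L2sq real_sqrt_mult)
qed

lemma weighted_norm_sq_expand: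
  fixes q \<alpha> \<beta> :: real and x y :: complex
  assumes "0 < q"
  shows "q * (cmod (complex_of_real \<alpha> * x - complex_of_real (\<beta> / q) * y))\<^sup>2
     = \<alpha>\<^sup>2 * (q * (cmod x)\<^sup>2) - 2 * \<alpha> * \<beta> * Re (y * cnj x) + \<beta>\<^sup>2 * ((cmod y)\<^sup>2 / q)"
proof -
  have "complex_of_real \<alpha> * x - complex_of_real (\<beta> / q) * y
      = Complex (\<alpha> * Re x - \<beta> / q * Re y) (\<alpha> * Im x - \<beta> / q * Im y)"
    by (simp add: complex_eq_iff)
  then show ?thesis
    unfolding cmod_power2 using assms by (simp add: power2_eq_square field_simps)
qed

locale positive_perturbation = dominated_kernel k a b
  for k :: "real \<Rightarrow> real \<Rightarrow> real" and a b :: "real \<Rightarrow> real" +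
  fixes q \<sigma> :: "real \<Rightarrow> real" and c C S :: real
  assumes q_measurable[measurable]: "q \<in> borel_measurable borel"
    and c_pos: "0 < c" and q_lower: "\<And>s. c \<le> q s" and q_upper: "\<And>s. q s \<le> C"
    and \<sigma>_measurable[measurable]: "\<sigma> \<in> borel_measurable borel"
    and \<sigma>_nonneg: "\<And>s. 0 \<le> \<sigma> s" and \<sigma>_upper: "\<And>s. \<sigma> s \<le> S"
begin

abbreviation P where "P \<equiv> sandwich_op k \<sigma>"

sublocale adj: dominated_kernel "\<lambda>s t. k t s" b a
  by (rule dominated_kernel_transpose) (rule dominated_kernel_axioms)

lemma adj_kernel_bound: "adj.kernel_bound = kernel_bound"
  by (simp add: adj.kernel_bound_def kernel_bound_def)

lemma q_pos: "0 < q s"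
  using c_pos q_lower[of s] by linarith

lemma S_nonneg: "0 \<le> S"
  using \<sigma>_nonneg[of 0] \<sigma>_upper[of 0] by linarith

definition sandwich_form :: "(real \<Rightarrow> complex) \<Rightarrow> real" where
  "sandwich_form x = (\<integral>t. \<sigma> t * (cmod (int_op k x t))\<^sup>2 \<partial>lborel)"

lemma sandwich_form_nonneg: "0 \<le> sandwich_form x"
  unfolding sandwich_form_def by (simp add: \<sigma>_nonneg)

lemma sandwich_form_integrable:
  assumes x: "x \<in> L2"
  shows "integrable lborel (\<lambda>t. \<sigma> t * (cmod (int_op k x t))\<^sup>2)"
proof (rule Bochner_Integration.integrable_bound)
  show "integrable lborel (\<lambda>t. S * (cmod (int_op k x t))\<^sup>2)"
    using L2_integrable_square[OF int_op_L2[OF x]] by simp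
  show "AE t in lborel. norm (\<sigma> t * (cmod (int_op k x t))\<^sup>2) \<le> norm (S * (cmod (int_op k x t))\<^sup>2)"
    using \<sigma>_nonneg \<sigma>_upper S_nonneg by (auto intro!: mult_right_mono)
qed (use x in measurable)

lemma weighted_int_op_L2:
  assumes x: "x \<in> L2"
  shows "(\<lambda>t. complex_of_real (\<sigma> t) * int_op k x t) \<in> L2"
    and "L2sq (\<lambda>t. complex_of_real (\<sigma> t) * int_op k x t) \<le> S * sandwich_form x"
proof -
  have Tx: "int_op k x \<in> L2" by (rule int_op_L2[OF x])
  have le: "(cmod (complex_of_real (\<sigma> t) * int_op k x t))\<^sup>2 \<le> S * (\<sigma> t * (cmod (int_op k x t))\<^sup>2)" for t
  proof -
    have "(cmod (complex_of_real (\<sigma> t) * int_op k x t))\<^sup>2 = \<sigma> t * (\<sigma> t * (cmod (int_op k x t))\<^sup>2)"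
      using \<sigma>_nonneg[of t] by (simp add: norm_mult power_mult_distrib power2_eq_square)
    also have "\<dots> \<le> S * (\<sigma> t * (cmod (int_op k x t))\<^sup>2)"
      using \<sigma>_nonneg[of t] \<sigma>_upper[of t] by (intro mult_right_mono) auto
    finally show ?thesis .
  qed
  show L2: "(\<lambda>t. complex_of_real (\<sigma> t) * int_op k x t) \<in> L2"
    by (rule L2_dominated(1)[OF _ Tx, of _ S]) (use x \<sigma>_nonneg \<sigma>_upper in \<open>auto simp: norm_mult mult_right_mono\<close>)
  have "integrable lborel (\<lambda>t. S * (\<sigma> t * (cmod (int_op k x t))\<^sup>2))"
    using sandwich_form_integrable[OF x] by simp
  then have "L2sq (\<lambda>t. complex_of_real (\<sigma> t) * int_op k x t) \<le> (\<integral>t. S * (\<sigma> t * (cmod (int_op k x t))\<^sup>2) \<partial>lborel)"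
    unfolding L2sq_def by (intro integral_mono[OF L2_integrable_square[OF L2]] le)
  then show "L2sq (\<lambda>t. complex_of_real (\<sigma> t) * int_op k x t) \<le> S * sandwich_form x"
    by (simp add: sandwich_form_def)
qed

lemma sandwich_form_le: "x \<in> L2 \<Longrightarrow> sandwich_form x \<le> S * kernel_bound * L2sq x"
proof -
  assume x: "x \<in> L2"
  have "sandwich_form x \<le> (\<integral>t. S * (cmod (int_op k x t))\<^sup>2 \<partial>lborel)"
    unfolding sandwich_form_def using L2_integrable_square[OF int_op_L2[OF x]] \<sigma>_upper
    by (intro integral_mono[OF sandwich_form_integrable[OF x]]) (auto intro: mult_right_mono)
  also have "\<dots> = S * L2sq (int_op k x)" by (simp add: L2sq_def)
  also have "\<dots> \<le> S * (kernel_bound * L2sq x)"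
    by (rule mult_left_mono[OF L2sq_int_op_le[OF x] S_nonneg])
  finally show ?thesis by (simp add: mult.assoc)
qed

lemma sandwich_L2: "x \<in> L2 \<Longrightarrow> P x \<in> L2"
  unfolding sandwich_op_def by (rule adj.int_op_L2[OF weighted_int_op_L2(1)])

lemma L2sq_sandwich_le_form: "x \<in> L2 \<Longrightarrow> L2sq (P x) \<le> kernel_bound * S * sandwich_form x"
proof -
  assume x: "x \<in> L2"
  have "L2sq (P x) \<le> kernel_bound * L2sq (\<lambda>t. complex_of_real (\<sigma> t) * int_op k x t)"
    unfolding sandwich_op_def adj_kernel_bound[symmetric]
    by (rule adj.L2sq_int_op_le[OF weighted_int_op_L2(1)[OF x]])
  also have "\<dots> \<le> kernel_bound * (S * sandwich_form x)"
    by (rule mult_left_mono[OF weighted_int_op_L2(2)[OF x] kernel_bound_nonneg])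
  finally show ?thesis by (simp add: mult.assoc)
qed

lemma L2sq_sandwich_le: "x \<in> L2 \<Longrightarrow> L2sq (P x) \<le> (kernel_bound * S)\<^sup>2 * L2sq x"
proof -
  assume x: "x \<in> L2"
  have "L2sq (P x) \<le> kernel_bound * S * sandwich_form x" by (rule L2sq_sandwich_le_form[OF x])
  also have "\<dots> \<le> kernel_bound * S * (S * kernel_bound * L2sq x)"
    using kernel_bound_nonneg S_nonneg by (intro mult_left_mono sandwich_form_le[OF x]) simp
  finally show ?thesis by (simp add: power2_eq_square mult_ac)
qed

lemma sandwich_inner:
  assumes x: "x \<in> L2"
  shows "(\<integral>s. P x s * cnj (x s) \<partial>lborel) = complex_of_real (sandwich_form x)"
proof -
  have "(\<integral>s. P x s * cnj (x s) \<partial>lborel)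
      = (\<integral>t. complex_of_real (\<sigma> t) * int_op k x t * cnj (int_op k x t) \<partial>lborel)"
    unfolding sandwich_op_def by (rule adj.int_op_adjoint[OF x weighted_int_op_L2(1)[OF x]])
  also have "\<dots> = (\<integral>t. complex_of_real (\<sigma> t * (cmod (int_op k x t))\<^sup>2) \<partial>lborel)"
    by (simp add: mult.assoc complex_norm_square[symmetric] del: of_real_power)
  also have "\<dots> = complex_of_real (sandwich_form x)"
    unfolding sandwich_form_def by (rule integral_complex_of_real)
  finally show ?thesis .
qed

lemma sandwich_scale: "P (\<lambda>s. z * x s) = (\<lambda>s. z * P x s)"
proof -
  have inner: "(\<lambda>t. complex_of_real (\<sigma> t) * int_op k (\<lambda>s. z * x s) t)
      = (\<lambda>t. z * (complex_of_real (\<sigma> t) * int_op k x t))"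
    by (simp add: int_op_scale mult.left_commute)
  show ?thesis unfolding sandwich_op_def inner by (simp add: fun_eq_iff int_op_scale)
qed

lemma sandwich_diff:
  assumes x: "x \<in> L2" and y: "y \<in> L2"
  shows "P (\<lambda>s. x s - y s) = (\<lambda>s. P x s - P y s)"
proof -
  have inner: "(\<lambda>t. complex_of_real (\<sigma> t) * int_op k (\<lambda>s. x s - y s) t)
      = (\<lambda>t. complex_of_real (\<sigma> t) * int_op k x t - complex_of_real (\<sigma> t) * int_op k y t)"
    by (simp add: int_op_diff[OF x y] right_diff_distrib)
  show ?thesis unfolding sandwich_op_def inner
    by (simp add: fun_eq_iff adj.int_op_diff[OF weighted_int_op_L2(1)[OF x] weighted_int_op_L2(1)[OF y]])
qed

definition weighted_L2sq :: "(real \<Rightarrow> complex) \<Rightarrow> real" where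
  "weighted_L2sq x = (\<integral>s. q s * (cmod (x s))\<^sup>2 \<partial>lborel)"

lemma weighted_L2sq_integrable: "x \<in> L2 \<Longrightarrow> integrable lborel (\<lambda>s. q s * (cmod (x s))\<^sup>2)"
proof (rule Bochner_Integration.integrable_bound)
  assume x: "x \<in> L2"
  show "integrable lborel (\<lambda>s. C * (cmod (x s))\<^sup>2)" using L2_integrable_square[OF x] by simp
  show "AE s in lborel. norm (q s * (cmod (x s))\<^sup>2) \<le> norm (C * (cmod (x s))\<^sup>2)"
  proof (rule AE_I2)
    fix s
    have "0 < q s" "q s \<le> C" by (rule q_pos, rule q_upper)
    then show "norm (q s * (cmod (x s))\<^sup>2) \<le> norm (C * (cmod (x s))\<^sup>2)"
      by (simp add: abs_mult mult_right_mono)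
  qed
  show "(\<lambda>s. q s * (cmod (x s))\<^sup>2) \<in> borel_measurable lborel"
    using L2_borel_measurable[OF x] by measurable
qed

lemma L2sq_le_weighted_L2sq: "x \<in> L2 \<Longrightarrow> c * L2sq x \<le> weighted_L2sq x"
  unfolding L2sq_def weighted_L2sq_def
  by (subst integral_mult_right_zero[symmetric], rule integral_mono)
     (auto simp: L2_integrable_square weighted_L2sq_integrable q_lower mult_right_mono)

lemma weighted_L2sq_le_L2sq: "x \<in> L2 \<Longrightarrow> weighted_L2sq x \<le> C * L2sq x"
  unfolding L2sq_def weighted_L2sq_def
  by (subst integral_mult_right_zero[symmetric], rule integral_mono)
     (auto simp: L2_integrable_square weighted_L2sq_integrable q_upper mult_right_mono)

\<comment> \<open>\<open>1 - \<tau> = M \<tau>\<close>, so in the expansion of \<open>\<integral> q |richardson x|\<^sup>2\<close> the cross term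
  \<open>-2 (1 - \<tau>) \<tau> \<langle>P x, x\<rangle>\<close> absorbs \<open>\<tau>\<^sup>2 \<integral> |P x|\<^sup>2 / q \<le> \<tau>\<^sup>2 M \<langle>P x, x\<rangle>\<close>\<close>
definition M :: real where "M = kernel_bound * S / c + 1"
definition \<tau> :: real where "\<tau> = 1 / (M + 1)"
definition \<alpha> :: real where "\<alpha> = M / (M + 1)"

lemma M_ge_1: "1 \<le> M"
  using kernel_bound_nonneg S_nonneg c_pos by (simp add: M_def)

lemma \<tau>_pos: "0 < \<tau>" and \<alpha>_pos: "0 < \<alpha>" and \<alpha>_less_1: "\<alpha> < 1"
  and \<alpha>_eq: "\<alpha> = 1 - \<tau>" and \<alpha>_eq_M_\<tau>: "\<alpha> = M * \<tau>"
  using M_ge_1 by (auto simp: \<tau>_def \<alpha>_def field_simps)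

lemma \<alpha>_sq_bounds: "0 < \<alpha>\<^sup>2" "\<alpha>\<^sup>2 < 1"
  using \<alpha>_pos \<alpha>_less_1 by (auto simp: power_less_one_iff)

lemma sandwich_over_q_integrable: "x \<in> L2 \<Longrightarrow> integrable lborel (\<lambda>s. (cmod (P x s))\<^sup>2 / q s)"
  and sandwich_over_q_le: "x \<in> L2 \<Longrightarrow> (\<integral>s. (cmod (P x s))\<^sup>2 / q s \<partial>lborel) \<le> M * sandwich_form x"
proof -
  assume x: "x \<in> L2"
  have Px: "P x \<in> L2" by (rule sandwich_L2[OF x])
  have bound: "integrable lborel (\<lambda>s. (cmod (P x s))\<^sup>2 / c)" using L2_integrable_square[OF Px] by simp
  have le: "(cmod (P x s))\<^sup>2 / q s \<le> (cmod (P x s))\<^sup>2 / c" for s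
    using q_lower[of s] c_pos by (intro divide_left_mono) auto
  show int: "integrable lborel (\<lambda>s. (cmod (P x s))\<^sup>2 / q s)"
  proof (rule Bochner_Integration.integrable_bound[OF bound])
    show "AE s in lborel. norm ((cmod (P x s))\<^sup>2 / q s) \<le> norm ((cmod (P x s))\<^sup>2 / c)"
      using le q_pos c_pos by (auto simp: abs_of_pos)
  qed (use Px L2_borel_measurable in measurable)
  have "(\<integral>s. (cmod (P x s))\<^sup>2 / q s \<partial>lborel) \<le> L2sq (P x) / c"
    unfolding L2sq_def using integral_mono[OF int bound le] by simp
  also have "\<dots> \<le> kernel_bound * S * sandwich_form x / c"
    by (rule divide_right_mono[OF L2sq_sandwich_le_form[OF x]]) (use c_pos in simp)
  also have "\<dots> \<le> M * sandwich_form x"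
    using sandwich_form_nonneg[of x] by (simp add: M_def algebra_simps)
  finally show "(\<integral>s. (cmod (P x s))\<^sup>2 / q s \<partial>lborel) \<le> M * sandwich_form x" .
qed

\<comment> \<open>one step \<open>x - \<tau> q\<^sup>-\<^sup>1 (q x + P x)\<close> of the preconditioned Richardson iteration\<close>
definition richardson :: "(real \<Rightarrow> complex) \<Rightarrow> (real \<Rightarrow> complex)" where
  "richardson x = (\<lambda>s. complex_of_real \<alpha> * x s - complex_of_real (\<tau> / q s) * P x s)"

lemma richardson_L2:
  assumes x: "x \<in> L2"
  shows "richardson x \<in> L2"
proof -
  have Px: "P x \<in> L2" by (rule sandwich_L2[OF x])
  have "(\<lambda>s. complex_of_real \<alpha> * x s) \<in> L2"
    by (rule L2_dominated(1)[OF _ x, of _ \<alpha>]) (use x L2_borel_measurable \<alpha>_pos in \<open>auto simp: norm_mult\<close>)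
  moreover have "(\<lambda>s. complex_of_real (- \<tau> / q s) * P x s) \<in> L2"
  proof (rule L2_dominated(1)[OF _ Px, of _ "\<tau> / c"])
    fix s
    have "cmod (complex_of_real (- \<tau> / q s) * P x s) = \<tau> / q s * cmod (P x s)"
      using \<tau>_pos q_pos[of s] by (simp add: norm_mult abs_of_pos del: of_real_divide)
    also have "\<dots> \<le> \<tau> / c * cmod (P x s)"
      using \<tau>_pos q_lower[of s] c_pos by (intro mult_right_mono divide_left_mono) auto
    finally show "cmod (complex_of_real (- \<tau> / q s) * P x s) \<le> \<tau> / c * cmod (P x s)" .
  qed (use Px L2_borel_measurable in measurable)
  ultimately have "(\<lambda>s. complex_of_real \<alpha> * x s + complex_of_real (- \<tau> / q s) * P x s) \<in> L2"
    by (rule L2_add(1))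
  then show ?thesis by (simp add: richardson_def)
qed

lemma weighted_L2sq_richardson_le: "x \<in> L2 \<Longrightarrow> weighted_L2sq (richardson x) \<le> \<alpha>\<^sup>2 * weighted_L2sq x"
proof -
  assume x: "x \<in> L2"
  have Px: "P x \<in> L2" by (rule sandwich_L2[OF x])
  have i1: "integrable lborel (\<lambda>s. \<alpha>\<^sup>2 * (q s * (cmod (x s))\<^sup>2))"
    using weighted_L2sq_integrable[OF x] by simp
  have i2: "integrable lborel (\<lambda>s. 2 * \<alpha> * \<tau> * Re (P x s * cnj (x s)))"
    by (intro Bochner_Integration.integrable_mult_right integrable_Re L2_inner_integrable[OF Px x])
  have i3: "integrable lborel (\<lambda>s. \<tau>\<^sup>2 * ((cmod (P x s))\<^sup>2 / q s))"
    by (intro Bochner_Integration.integrable_mult_right sandwich_over_q_integrable[OF x])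
  have "weighted_L2sq (richardson x) = (\<integral>s. \<alpha>\<^sup>2 * (q s * (cmod (x s))\<^sup>2)
      - 2 * \<alpha> * \<tau> * Re (P x s * cnj (x s)) + \<tau>\<^sup>2 * ((cmod (P x s))\<^sup>2 / q s) \<partial>lborel)"
    unfolding weighted_L2sq_def richardson_def
    by (rule Bochner_Integration.integral_cong[OF refl]) (rule weighted_norm_sq_expand[OF q_pos])
  also have "\<dots> = \<alpha>\<^sup>2 * weighted_L2sq x - 2 * \<alpha> * \<tau> * (\<integral>s. Re (P x s * cnj (x s)) \<partial>lborel)
      + \<tau>\<^sup>2 * (\<integral>s. (cmod (P x s))\<^sup>2 / q s \<partial>lborel)"
    unfolding Bochner_Integration.integral_add[OF Bochner_Integration.integrable_diff[OF i1 i2] i3]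
      Bochner_Integration.integral_diff[OF i1 i2] weighted_L2sq_def integral_mult_right_zero ..
  also have "(\<integral>s. Re (P x s * cnj (x s)) \<partial>lborel) = sandwich_form x"
    using integral_Re[OF L2_inner_integrable[OF Px x]] sandwich_inner[OF x] by simp
  finally have expand: "weighted_L2sq (richardson x) = \<alpha>\<^sup>2 * weighted_L2sq x - 2 * \<alpha> * \<tau> * sandwich_form x
      + \<tau>\<^sup>2 * (\<integral>s. (cmod (P x s))\<^sup>2 / q s \<partial>lborel)" .
  have "\<tau>\<^sup>2 * (\<integral>s. (cmod (P x s))\<^sup>2 / q s \<partial>lborel) \<le> \<tau>\<^sup>2 * (M * sandwich_form x)"
    by (intro mult_left_mono sandwich_over_q_le[OF x]) simp
  also have "\<dots> \<le> 2 * \<alpha> * \<tau> * sandwich_form x"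
    using \<alpha>_eq_M_\<tau> \<tau>_pos M_ge_1 sandwich_form_nonneg[of x] by (simp add: power2_eq_square mult_right_mono)
  finally show ?thesis unfolding expand by simp
qed

lemma richardson_iterate_L2: "g \<in> L2 \<Longrightarrow> (richardson ^^ n) g \<in> L2"
  by (induction n) (simp_all add: richardson_L2)

lemma L2sq_richardson_iterate_le:
  assumes g: "g \<in> L2"
  shows "L2sq ((richardson ^^ n) g) \<le> weighted_L2sq g / c * (\<alpha>\<^sup>2) ^ n"
proof -
  have "weighted_L2sq ((richardson ^^ n) g) \<le> (\<alpha>\<^sup>2) ^ n * weighted_L2sq g"
  proof (induction n)
    case (Suc n)
    have "weighted_L2sq ((richardson ^^ Suc n) g) \<le> \<alpha>\<^sup>2 * weighted_L2sq ((richardson ^^ n) g)"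
      using weighted_L2sq_richardson_le[OF richardson_iterate_L2[OF g]] by simp
    also have "\<dots> \<le> \<alpha>\<^sup>2 * ((\<alpha>\<^sup>2) ^ n * weighted_L2sq g)" by (intro mult_left_mono Suc.IH) simp
    finally show ?case by (simp add: mult.assoc)
  qed simp
  from order_trans[OF L2sq_le_weighted_L2sq[OF richardson_iterate_L2[OF g]] this] c_pos
  show ?thesis by (simp add: field_simps)
qed

lemma divide_q_L2:
  assumes f: "f \<in> L2"
  shows "(\<lambda>t. complex_of_real (1 / q t) * f t) \<in> L2"
    and "L2sq (\<lambda>t. complex_of_real (1 / q t) * f t) \<le> L2sq f / c\<^sup>2"
proof -
  have le: "cmod (complex_of_real (1 / q t) * f t) \<le> 1 / c * cmod (f t)" for t
  proof -
    have "cmod (complex_of_real (1 / q t) * f t) = cmod (f t) / q t"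
      using q_pos[of t] by (simp add: norm_divide)
    also have "\<dots> \<le> cmod (f t) / c" using q_pos[of t] q_lower[of t] c_pos by (intro divide_left_mono) auto
    finally show ?thesis by simp
  qed
  note D = L2_dominated[OF _ f le]
  show "(\<lambda>t. complex_of_real (1 / q t) * f t) \<in> L2" by (rule D(1)) (use f L2_borel_measurable in measurable)
  show "L2sq (\<lambda>t. complex_of_real (1 / q t) * f t) \<le> L2sq f / c\<^sup>2"
    using D(2) f L2_borel_measurable by (simp add: power_divide) measurable
qed

definition neumann_term :: "(real \<Rightarrow> complex) \<Rightarrow> nat \<Rightarrow> (real \<Rightarrow> complex)" where
  "neumann_term f n = (\<lambda>s. complex_of_real \<tau> * (richardson ^^ n) (\<lambda>t. complex_of_real (1 / q t) * f t) s)"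

\<comment> \<open>\<open>\<tau> \<Sum> K\<^sup>n q\<^sup>-\<^sup>1\<close> inverts \<open>q + P\<close> because \<open>1 - K = \<tau> q\<^sup>-\<^sup>1 (q + P)\<close>\<close>
definition richardson_inverse :: "(real \<Rightarrow> complex) \<Rightarrow> (real \<Rightarrow> complex)" where
  "richardson_inverse f = (\<lambda>s. \<Sum>n. neumann_term f n s)"

lemma neumann_term_L2: "f \<in> L2 \<Longrightarrow> neumann_term f n \<in> L2"
  and L2sq_neumann_term_le:
    "f \<in> L2 \<Longrightarrow> L2sq (neumann_term f n) \<le> \<tau>\<^sup>2 * C / c ^ 3 * L2sq f * (\<alpha>\<^sup>2) ^ n"
proof -
  assume f: "f \<in> L2"
  define g where "g = (\<lambda>t. complex_of_real (1 / q t) * f t)"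
  have g: "g \<in> L2" unfolding g_def by (rule divide_q_L2(1)[OF f])
  have h: "(richardson ^^ n) g \<in> L2" by (rule richardson_iterate_L2[OF g])
  note D = L2_dominated[OF _ h, of "neumann_term f n" \<tau>]
  have le: "cmod (neumann_term f n s) \<le> \<tau> * cmod ((richardson ^^ n) g s)" for s
    using \<tau>_pos by (simp add: neumann_term_def g_def norm_mult)
  show "neumann_term f n \<in> L2" by (rule D(1)[OF _ le]) (use h L2_borel_measurable in \<open>simp add: neumann_term_def g_def\<close>)
  have "L2sq (neumann_term f n) \<le> \<tau>\<^sup>2 * L2sq ((richardson ^^ n) g)"
    by (rule D(2)[OF _ le]) (use h L2_borel_measurable in \<open>simp add: neumann_term_def g_def\<close>)
  also have "\<dots> \<le> \<tau>\<^sup>2 * (weighted_L2sq g / c * (\<alpha>\<^sup>2) ^ n)"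
    by (intro mult_left_mono L2sq_richardson_iterate_le[OF g]) simp
  also have "\<dots> \<le> \<tau>\<^sup>2 * (C * (L2sq f / c\<^sup>2) / c * (\<alpha>\<^sup>2) ^ n)"
  proof -
    have "weighted_L2sq g \<le> C * L2sq g" by (rule weighted_L2sq_le_L2sq[OF g])
    also have "\<dots> \<le> C * (L2sq f / c\<^sup>2)"
      using divide_q_L2(2)[OF f] c_pos q_lower[of 0] q_upper[of 0] unfolding g_def
      by (intro mult_left_mono) auto
    finally show ?thesis using c_pos by (intro mult_left_mono mult_right_mono divide_right_mono) auto
  qed
  also have "\<dots> = \<tau>\<^sup>2 * C / c ^ 3 * L2sq f * (\<alpha>\<^sup>2) ^ n"
    by (simp add: power2_eq_square power3_eq_cube)
  finally show "L2sq (neumann_term f n) \<le> \<tau>\<^sup>2 * C / c ^ 3 * L2sq f * (\<alpha>\<^sup>2) ^ n" .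
qed

lemma richardson_inverse_L2: "f \<in> L2 \<Longrightarrow> richardson_inverse f \<in> L2"
  and L2sq_richardson_inverse_le:
    "f \<in> L2 \<Longrightarrow> L2sq (richardson_inverse f) \<le> \<tau>\<^sup>2 * C / c ^ 3 / (1 - \<alpha>)\<^sup>2 * L2sq f"
proof -
  assume f: "f \<in> L2"
  note S = L2_suminf[OF neumann_term_L2[OF f] L2sq_neumann_term_le[OF f] \<alpha>_sq_bounds]
  show "richardson_inverse f \<in> L2" using S(2) by (simp add: richardson_inverse_def)
  show "L2sq (richardson_inverse f) \<le> \<tau>\<^sup>2 * C / c ^ 3 / (1 - \<alpha>)\<^sup>2 * L2sq f"
    using S(3) \<alpha>_pos by (simp add: richardson_inverse_def)
qed

lemma perturbed_op_L2: "x \<in> L2 \<Longrightarrow> perturbed_op k q \<sigma> x \<in> L2"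
  and L2sq_perturbed_op_le:
    "x \<in> L2 \<Longrightarrow> L2sq (perturbed_op k q \<sigma> x) \<le> (2 * C\<^sup>2 + 2 * (kernel_bound * S)\<^sup>2) * L2sq x"
proof -
  assume x: "x \<in> L2"
  have [measurable]: "x \<in> borel_measurable lborel" using x by (rule L2_borel_measurable)
  have le: "cmod (complex_of_real (q s) * x s) \<le> C * cmod (x s)" for s
    using q_pos[of s] q_upper[of s] by (simp add: norm_mult mult_right_mono)
  have "(\<lambda>s. complex_of_real (q s) * x s) \<in> borel_measurable lborel" by measurable
  note Q = L2_dominated[OF this x le]
  note A = L2_add[OF Q(1) sandwich_L2[OF x], folded perturbed_op_def]
  show "perturbed_op k q \<sigma> x \<in> L2" by (rule A(1))
  have "L2sq (perturbed_op k q \<sigma> x)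
      \<le> 2 * L2sq (\<lambda>s. complex_of_real (q s) * x s) + 2 * L2sq (P x)" by (rule A(2))
  also have "\<dots> \<le> 2 * (C\<^sup>2 * L2sq x) + 2 * ((kernel_bound * S)\<^sup>2 * L2sq x)"
    using Q(2) L2sq_sandwich_le[OF x] by (intro add_mono mult_left_mono) simp_all
  finally show "L2sq (perturbed_op k q \<sigma> x) \<le> (2 * C\<^sup>2 + 2 * (kernel_bound * S)\<^sup>2) * L2sq x"
    by (simp add: algebra_simps)
qed

lemma sandwich_suminf:
  assumes xs: "\<And>n. xs n \<in> L2" and decay: "\<And>n. L2sq (xs n) \<le> D * r ^ n"
    and r: "0 < r" "r < 1"
  shows "summable (\<lambda>n. cmod (P (xs n) s))" and "P (\<lambda>t. \<Sum>n. xs n t) s = (\<Sum>n. P (xs n) s)"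
proof -
  define ys where "ys n = (\<lambda>t. complex_of_real (\<sigma> t) * int_op k (xs n) t)" for n
  have ys: "ys n \<in> L2" for n unfolding ys_def by (rule weighted_int_op_L2(1)[OF xs])
  have ys_decay: "L2sq (ys n) \<le> (S * (S * kernel_bound * D)) * r ^ n" for n
  proof -
    have "L2sq (ys n) \<le> S * sandwich_form (xs n)" unfolding ys_def by (rule weighted_int_op_L2(2)[OF xs])
    also have "\<dots> \<le> S * (S * kernel_bound * (D * r ^ n))"
      using sandwich_form_le[OF xs, of n] decay[of n] S_nonneg kernel_bound_nonneg
      by (meson mult_left_mono mult_nonneg_nonneg order_trans)
    finally show ?thesis by (simp add: mult.assoc)
  qed
  have "(\<lambda>t. complex_of_real (\<sigma> t) * int_op k (\<lambda>t. \<Sum>n. xs n t) t) = (\<lambda>t. \<Sum>n. ys n t)"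
  proof
    fix t
    have "summable (\<lambda>n. int_op k (xs n) t)"
      by (rule summable_norm_cancel[OF int_op_suminf(1)[OF xs decay r]])
    then show "complex_of_real (\<sigma> t) * int_op k (\<lambda>t. \<Sum>n. xs n t) t = (\<Sum>n. ys n t)"
      unfolding int_op_suminf(2)[OF xs decay r] ys_def by (rule suminf_mult[symmetric])
  qed
  then have "P (\<lambda>t. \<Sum>n. xs n t) s = int_op (\<lambda>s t. k t s) (\<lambda>t. \<Sum>n. ys n t) s"
    by (simp add: sandwich_op_def)
  also have "\<dots> = (\<Sum>n. P (xs n) s)"
    unfolding adj.int_op_suminf(2)[OF ys ys_decay r] by (simp add: ys_def sandwich_op_def)
  finally show "P (\<lambda>t. \<Sum>n. xs n t) s = (\<Sum>n. P (xs n) s)" .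
  show "summable (\<lambda>n. cmod (P (xs n) s))"
    using adj.int_op_suminf(1)[OF ys ys_decay r] by (simp add: ys_def sandwich_op_def)
qed

lemma perturbed_op_scaled:
  "perturbed_op k q \<sigma> (\<lambda>s. complex_of_real \<tau> * h s) s = complex_of_real (q s) * (h s - richardson h s)"
  unfolding perturbed_op_def sandwich_scale richardson_def \<alpha>_eq
  using q_pos[of s] by (simp add: field_simps)

lemma perturbed_op_richardson_inverse:
  assumes f: "f \<in> L2"
  shows "AE s in lborel. perturbed_op k q \<sigma> (richardson_inverse f) s = f s"
proof -
  define h where "h n = (richardson ^^ n) (\<lambda>t. complex_of_real (1 / q t) * f t)" for n
  note terms = neumann_term_L2[OF f] L2sq_neumann_term_le[OF f]
  note Psum = sandwich_suminf[OF terms \<alpha>_sq_bounds]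
  show ?thesis
    using L2_suminf(1)[OF terms \<alpha>_sq_bounds]
  proof eventually_elim
    case (elim s)
    have sum: "summable (\<lambda>n. neumann_term f n s)" by (rule summable_norm_cancel[OF elim])
    have h_sum: "summable (\<lambda>n. norm (h n s))"
      using summable_mult[OF elim, of "1 / \<tau>"] \<tau>_pos by (simp add: neumann_term_def h_def norm_mult)
    have "perturbed_op k q \<sigma> (richardson_inverse f) s
        = (\<Sum>n. complex_of_real (q s) * neumann_term f n s) + (\<Sum>n. P (neumann_term f n) s)"
      unfolding perturbed_op_def richardson_inverse_def Psum(2) by (simp add: suminf_mult[OF sum])
    also have "\<dots> = (\<Sum>n. perturbed_op k q \<sigma> (neumann_term f n) s)"
      unfolding perturbed_op_def
      by (rule suminf_add[OF summable_mult[OF sum] summable_norm_cancel[OF Psum(1)]])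
    also have "\<dots> = (\<Sum>n. complex_of_real (q s) * (h n s - h (Suc n) s))"
      by (simp add: neumann_term_def perturbed_op_scaled h_def)
    also have "\<dots> = complex_of_real (q s) * h 0 s"
    proof -
      have "summable (\<lambda>n. h n s)" by (rule summable_norm_cancel[OF h_sum])
      then have "summable (\<lambda>n. h n s - h (Suc n) s)"
        using summable_ignore_initial_segment[of "\<lambda>n. h n s" 1] by (intro summable_diff) simp_all
      then show ?thesis by (simp add: suminf_mult suminf_telescope_of_summable[OF h_sum])
    qed
    also have "\<dots> = f s" using q_pos[of s] by (simp add: h_def)
    finally show ?case .
  qed
qed

lemma richardson_scaled_diff:
  assumes "x \<in> L2" "y \<in> L2"
  shows "richardson (\<lambda>s. z * (x s - y s)) = (\<lambda>s. z * (richardson x s - richardson y s))"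
  unfolding richardson_def sandwich_scale sandwich_diff[OF assms] by (simp add: fun_eq_iff algebra_simps)

lemma divide_q_perturbed_op:
  "(\<lambda>s. complex_of_real (1 / q s) * perturbed_op k q \<sigma> x s)
    = (\<lambda>s. complex_of_real (1 / \<tau>) * (x s - richardson x s))"
proof
  fix s
  have "complex_of_real (q s) \<noteq> 0" "complex_of_real \<tau> \<noteq> 0" using q_pos[of s] \<tau>_pos by auto
  then show "complex_of_real (1 / q s) * perturbed_op k q \<sigma> x s
      = complex_of_real (1 / \<tau>) * (x s - richardson x s)"
    unfolding perturbed_op_def richardson_def \<alpha>_eq by (simp add: field_simps)
qed

lemma richardson_iterate_perturbed_op:
  assumes x: "x \<in> L2"
  shows "(richardson ^^ n) (\<lambda>s. complex_of_real (1 / q s) * perturbed_op k q \<sigma> x s)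
    = (\<lambda>s. complex_of_real (1 / \<tau>) * ((richardson ^^ n) x s - (richardson ^^ Suc n) x s))"
proof (induction n)
  case 0
  show ?case unfolding funpow.simps comp_apply id_apply by (rule divide_q_perturbed_op)
next
  case (Suc n)
  have "(richardson ^^ Suc n) (\<lambda>s. complex_of_real (1 / q s) * perturbed_op k q \<sigma> x s)
      = richardson (\<lambda>s. complex_of_real (1 / \<tau>) * ((richardson ^^ n) x s - (richardson ^^ Suc n) x s))"
    by (simp only: funpow.simps(2) comp_apply Suc.IH)
  also have "\<dots> = (\<lambda>s. complex_of_real (1 / \<tau>)
      * (richardson ((richardson ^^ n) x) s - richardson ((richardson ^^ Suc n) x) s))"
    by (rule richardson_scaled_diff[OF richardson_iterate_L2[OF x] richardson_iterate_L2[OF x]])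
  finally show ?case by simp
qed

lemma richardson_inverse_perturbed_op:
  assumes x: "x \<in> L2"
  shows "AE s in lborel. richardson_inverse (perturbed_op k q \<sigma> x) s = x s"
  using L2_suminf(1)[OF richardson_iterate_L2[OF x] L2sq_richardson_iterate_le[OF x] \<alpha>_sq_bounds]
proof eventually_elim
  case (elim s)
  have "richardson_inverse (perturbed_op k q \<sigma> x) s = (\<Sum>n. (richardson ^^ n) x s - (richardson ^^ Suc n) x s)"
    unfolding richardson_inverse_def neumann_term_def richardson_iterate_perturbed_op[OF x]
    using \<tau>_pos by simp
  also have "\<dots> = x s" using suminf_telescope_of_summable[OF elim] by simp
  finally show ?case .
qed

theorem boundedly_invertible_perturbed_op: "boundedly_invertible_L2 (perturbed_op k q \<sigma>)"
  unfolding boundedly_invertible_L2_def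
proof (intro conjI exI ballI)
  show "bounded_on_L2 (perturbed_op k q \<sigma>)"
    by (rule bounded_on_L2I[OF perturbed_op_L2 L2sq_perturbed_op_le])
  show "bounded_on_L2 richardson_inverse"
    by (rule bounded_on_L2I[OF richardson_inverse_L2 L2sq_richardson_inverse_le])
qed (fact perturbed_op_richardson_inverse richardson_inverse_perturbed_op)+

end

lemma integrable_inverse_quadratic:
  fixes \<alpha> \<beta> :: real
  assumes "0 < \<alpha>" "0 < \<beta>"
  shows "integrable lborel (\<lambda>x. 1 / (\<alpha> * x\<^sup>2 + \<beta>))"
proof (rule Bochner_Integration.integrable_bound)
  define m where "m = min \<alpha> \<beta>"
  have m: "0 < m" "m \<le> \<alpha>" "m \<le> \<beta>" using assms by (auto simp: m_def)
  show "integrable lborel (\<lambda>x::real. inverse (1 + x\<^sup>2) / m)"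
    using integrable_inverse_1_plus_square by (simp add: set_integrable_def einterval_def)
  show "AE x in lborel. norm (1 / (\<alpha> * x\<^sup>2 + \<beta>)) \<le> norm (inverse (1 + x\<^sup>2) / m)"
  proof (rule AE_I2)
    fix x :: real
    have "m * (1 + x\<^sup>2) \<le> \<alpha> * x\<^sup>2 + \<beta>"
      using m mult_right_mono[OF m(2), of "x\<^sup>2"] by (simp add: algebra_simps)
    moreover have "0 < m * (1 + x\<^sup>2)" using m by (simp add: add_pos_nonneg)
    ultimately show "norm (1 / (\<alpha> * x\<^sup>2 + \<beta>)) \<le> norm (inverse (1 + x\<^sup>2) / m)"
      by (simp add: field_simps frac_le)
  qed
qed measurable

lemma dominated_kernel_T2:
  assumes \<epsilon>: "0 < \<epsilon>"
  shows "dominated_kernel (T2_kernel \<epsilon>) (\<lambda>t. 1 / (t\<^sup>2 / 2 + \<epsilon>)) (\<lambda>s. 1 / (pi\<^sup>2 * (s\<^sup>2 / 4 + \<epsilon>)))"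
proof
  show "(\<lambda>(s, t). T2_kernel \<epsilon> s t) \<in> borel_measurable (lborel \<Otimes>\<^sub>M lborel)"
    unfolding T2_kernel_def by measurable
  fix s t :: real
  have A: "0 < t\<^sup>2 / 2 + \<epsilon>" and B: "0 < s\<^sup>2 / 4 + \<epsilon>" using \<epsilon> by (simp_all add: add_nonneg_pos)
  have "t\<^sup>2 + (s - t)\<^sup>2 - (t\<^sup>2 / 2 + s\<^sup>2 / 4) = 3 / 2 * (t - 2 * s / 3)\<^sup>2 + s\<^sup>2 / 12"
    by (simp add: power2_eq_square field_simps)
  then have "t\<^sup>2 / 2 + s\<^sup>2 / 4 \<le> t\<^sup>2 + (s - t)\<^sup>2"
    using zero_le_power2[of "t - 2 * s / 3"] zero_le_power2[of s] by linarith
  then have D: "(t\<^sup>2 / 2 + \<epsilon>) + (s\<^sup>2 / 4 + \<epsilon>) \<le> t\<^sup>2 + (s - t)\<^sup>2 + 2 * \<epsilon>" by simp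
  have prod_le: "X * Y \<le> (X + Y)\<^sup>2" if "0 \<le> X" "0 \<le> Y" for X Y :: real
    using mult_nonneg_nonneg[OF that] zero_le_power2[of X] zero_le_power2[of Y]
    unfolding power2_sum by linarith
  have "(t\<^sup>2 / 2 + \<epsilon>) * (s\<^sup>2 / 4 + \<epsilon>) \<le> ((t\<^sup>2 / 2 + \<epsilon>) + (s\<^sup>2 / 4 + \<epsilon>))\<^sup>2"
    using A B by (intro prod_le) simp_all
  also have "\<dots> \<le> (t\<^sup>2 + (s - t)\<^sup>2 + 2 * \<epsilon>)\<^sup>2" using A B D by (intro power_mono) auto
  finally show "(T2_kernel \<epsilon> s t)\<^sup>2 \<le> 1 / (t\<^sup>2 / 2 + \<epsilon>) * (1 / (pi\<^sup>2 * (s\<^sup>2 / 4 + \<epsilon>)))"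
    using A B by (simp add: T2_kernel_def power_divide power_mult_distrib divide_simps)
  show "0 \<le> 1 / (t\<^sup>2 / 2 + \<epsilon>)" "0 \<le> 1 / (pi\<^sup>2 * (s\<^sup>2 / 4 + \<epsilon>))" using A B by simp_all
next
  show "integrable lborel (\<lambda>t. 1 / (t\<^sup>2 / 2 + \<epsilon>))"
    using integrable_inverse_quadratic[of "1/2" \<epsilon>] \<epsilon> by simp
  show "integrable lborel (\<lambda>s. 1 / (pi\<^sup>2 * (s\<^sup>2 / 4 + \<epsilon>)))"
    using integrable_inverse_quadratic[of "pi\<^sup>2 / 4" "pi\<^sup>2 * \<epsilon>"] \<epsilon> by (simp add: algebra_simps)
qed

lemma T3_symbol_bounds:
  assumes "1 < \<epsilon>"
  shows "0 \<le> T3_symbol \<epsilon> s" and "T3_symbol \<epsilon> s < 1 / 2"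
proof -
  have "(2::real)\<^sup>2 < s\<^sup>2 + 4 * \<epsilon>"
    using assms zero_le_power2[of s] unfolding power2_eq_square[of 2] by linarith
  then have "2 < sqrt (s\<^sup>2 + 4 * \<epsilon>)" by (rule real_less_rsqrt)
  then show "0 \<le> T3_symbol \<epsilon> s" "T3_symbol \<epsilon> s < 1 / 2"
    using \<open>2\<^sup>2 < s\<^sup>2 + 4 * \<epsilon>\<close> by (simp_all add: T3_symbol_def divide_simps)
qed

lemma op_A_eq_perturbed_op:
  "op_A \<kappa>t \<kappa> \<epsilon> = perturbed_op (T2_kernel \<epsilon>) (\<lambda>s. \<kappa> / \<kappa>t + 1 / sqrt (s\<^sup>2 + 2 * \<epsilon>))
     (\<lambda>s. 1 / \<kappa> * inverse (1 - T3_symbol \<epsilon> s / \<kappa>))"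
  unfolding op_A_def perturbed_op_def sandwich_op_def T0_def T2_def T2_adj_def resolvent3_def mult_op_def
  by (simp add: fun_eq_iff int_op_scale[symmetric] distrib_right mult.assoc)

lemma positive_perturbation_T2:
  assumes "0 < \<kappa>t" and "1 / 2 < \<kappa>" and "1 < \<epsilon>"
  shows "positive_perturbation (T2_kernel \<epsilon>) (\<lambda>t. 1 / (t\<^sup>2 / 2 + \<epsilon>)) (\<lambda>s. 1 / (pi\<^sup>2 * (s\<^sup>2 / 4 + \<epsilon>)))
     (\<lambda>s. \<kappa> / \<kappa>t + 1 / sqrt (s\<^sup>2 + 2 * \<epsilon>)) (\<lambda>s. 1 / \<kappa> * inverse (1 - T3_symbol \<epsilon> s / \<kappa>))
     (\<kappa> / \<kappa>t) (\<kappa> / \<kappa>t + 1) (1 / (\<kappa> - 1 / 2))"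
  unfolding positive_perturbation_def positive_perturbation_axioms_def
proof (intro conjI allI dominated_kernel_T2)
  fix s :: real
  have "1 \<le> sqrt (s\<^sup>2 + 2 * \<epsilon>)" using assms(3) by (simp add: add_increasing)
  then show "\<kappa> / \<kappa>t \<le> \<kappa> / \<kappa>t + 1 / sqrt (s\<^sup>2 + 2 * \<epsilon>)"
    and "\<kappa> / \<kappa>t + 1 / sqrt (s\<^sup>2 + 2 * \<epsilon>) \<le> \<kappa> / \<kappa>t + 1" by simp_all
  have "1 / \<kappa> * inverse (1 - T3_symbol \<epsilon> s / \<kappa>) = 1 / (\<kappa> - T3_symbol \<epsilon> s)"
    using assms(2) by (simp add: field_simps)
  moreover have "\<kappa> - 1 / 2 \<le> \<kappa> - T3_symbol \<epsilon> s" "0 < \<kappa> - 1 / 2"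
    using T3_symbol_bounds[OF assms(3), of s] assms(2) by linarith+
  ultimately show "0 \<le> 1 / \<kappa> * inverse (1 - T3_symbol \<epsilon> s / \<kappa>)"
    and "1 / \<kappa> * inverse (1 - T3_symbol \<epsilon> s / \<kappa>) \<le> 1 / (\<kappa> - 1 / 2)"
    by (auto intro!: divide_left_mono)
qed (use assms in \<open>auto simp: T3_symbol_def\<close>)

theorem lemma5:
  fixes \<kappa>t \<kappa> \<epsilon> :: real
  assumes "\<kappa>t > 0" and "\<kappa> \<ge> 1 / sqrt 2" and "\<epsilon> > 1"
  shows "boundedly_invertible_L2 (op_A \<kappa>t \<kappa> \<epsilon>)"
proof -
  have "1 / 2 < 1 / sqrt 2" by (simp add: real_less_lsqrt)
  with assms(2) have "1 / 2 < \<kappa>" by linarith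
  from positive_perturbation_T2[OF assms(1) this assms(3)] show ?thesis
    unfolding op_A_eq_perturbed_op by (rule positive_perturbation.boundedly_invertible_perturbed_op)
qed

end
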